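(* Suppose $k_i^{(m)},h_i^{(m)}\in\mathbb{C}$ ($m,i\in\mathbb{Z}$) satisfy $$(i-n)k_i^{(m)}=(2m-n-i)h_{n-m+i}^{(n)}\quad\text{for all }m,n,i\in\mathbb{Z}.$$ Then there is $\lambda\in\mathbb{C}$ such that $k_i^{(m)}=h_i^{(m)}=\delta_{m,i}\lambda$ for all $m,i\in\mathbb{Z}$.
   Context: $\delta_{m,i}$ denotes the Kronecker delta. *)

theory Defs
  imports Complex_Main
begin

end

theory Submission
  imports Defs
begin

text \<open>Each instance of the relation with a vanishing coefficient isolates one unknown:
  taking \<open>i = n\<close> kills the left side and forces \<open>h\<close> to be diagonal; then taking
  \<open>n = i + 1\<close> forces \<open>k\<close> to be diagonal; finally \<open>i = m \<noteq> n\<close> gives \<open>k m m = h n n\<close>,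
  so all diagonal entries of both families agree.\<close>

context
  fixes k h :: "int \<Rightarrow> int \<Rightarrow> 'a::field_char_0"
  assumes rel: "\<And>m n i. of_int (i - n) * k m i = of_int (2*m - n - i) * h n (n - m + i)"
begin

lemma h_off_diagonal_zero:
  assumes "j \<noteq> n"
  shows "h n j = 0"
proof -
  have "of_int (n - n) * k (2*n - j) n = of_int (2*(2*n - j) - n - n) * h n (n - (2*n - j) + n)"
    by (rule rel)
  then have "of_int (2*(n - j)) * h n j = 0"
    by simp
  with assms show ?thesis by simp
qed

lemma k_off_diagonal_zero:
  assumes "i \<noteq> m"
  shows "k m i = 0"
proof -
  have "of_int (i - (i + 1)) * k m i = of_int (2*m - (i + 1) - i) * h (i + 1) (i + 1 - m + i)"
    by (rule rel)
  moreover have "h (i + 1) (i + 1 - m + i) = 0"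
    using assms by (intro h_off_diagonal_zero) simp
  ultimately show ?thesis by simp
qed

lemma k_diagonal_eq_h_diagonal:
  assumes "m \<noteq> n"
  shows "k m m = h n n"
proof -
  have "of_int (m - n) * k m m = of_int (2*m - n - m) * h n (n - m + m)"
    by (rule rel)
  then have "of_int (m - n) * k m m = of_int (m - n) * h n n"
    by (simp add: algebra_simps)
  with assms show ?thesis by simp
qed

lemma h_diagonal_constant: "h n n = h 0 0"
proof -
  define m where "m = \<bar>n\<bar> + 1"
  have "m \<noteq> n" "m \<noteq> 0" unfolding m_def by auto
  then show ?thesis
    using k_diagonal_eq_h_diagonal[of m n] k_diagonal_eq_h_diagonal[of m 0] by simp
qed

lemma k_diagonal_constant: "k m m = h 0 0"
  using k_diagonal_eq_h_diagonal[of m "m + 1"] h_diagonal_constant[of "m + 1"] by simp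

end

theorem proposition2p1:
  fixes k h :: "int \<Rightarrow> int \<Rightarrow> complex"
  assumes "\<And>m n i. of_int (i - n) * k m i = of_int (2*m - n - i) * h n (n - m + i)"
  shows "\<exists>c::complex. \<forall>m i. k m i = (if m = i then c else 0) \<and> h m i = (if m = i then c else 0)"
proof (intro exI allI conjI)
  fix m i
  show "k m i = (if m = i then h 0 0 else 0)"
    using k_off_diagonal_zero[OF assms, of i m] k_diagonal_constant[OF assms, of m] by auto
  show "h m i = (if m = i then h 0 0 else 0)"
    using h_off_diagonal_zero[OF assms, of i m] h_diagonal_constant[OF assms, of m] by auto
qed

end
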